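(* Assume (A1). For any $\delta>0$, the function $C_\delta(t)=\int_0^t\frac{dG(v)}{\bar G(v)\bar H^{\delta}(v)}$ is regularly varying at infinity with index $\delta/\gamma$, and $C_\delta(t)\sim\frac{\gamma/\gamma_C}{\delta\,\bar H^{\delta}(t)}$ as $t\to+\infty$.
   Context: Let $K\ge 1$. Let $X\ge0$ have continuous distribution function $F$ and cause $\mathcal C\in\{1,\dots,K\}$; let $C\ge0$ be independent with continuous distribution function $G$. Let $\bar F^{(j)}(t)=P(X>t,\mathcal C=j)$, $\bar F=1-F=\sum_j\bar F^{(j)}$, $\bar G=1-G$, $\bar H=\bar F\bar G$. Regular variation with index $\alpha$: $f(tx)/f(t)\to x^\alpha$ as $t\to\infty$ for all $x>0$. (A1): for every $j$, $\bar F^{(j)}$ is regularly varying with index $-1/\gamma_j$ ($\gamma_j>0$), and $\bar G$ regularly varying with index $-1/\gamma_C$ ($\gamma_C>0$); $\gamma_F=\max_j\gamma_j$ and $1/\gamma=1/\gamma_F+1/\gamma_C$. *)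

theory Defs
  imports "HOL-Probability.Probability" "HOL-Library.Landau_Symbols"
begin

definition regularly_varying :: "(real \<Rightarrow> real) \<Rightarrow> real \<Rightarrow> bool" where
  "regularly_varying f \<alpha> \<longleftrightarrow>
     (\<forall>x>0. ((\<lambda>t. f (t * x) / f t) \<longlongrightarrow> x powr \<alpha>) at_top)"

end

theory Submission
  imports Defs "HOL-Real_Asymp.Real_Asymp"
begin

text \<open>
  The function \<open>\<phi> = 1 / (barG * barH powr \<delta>)\<close> is nondecreasing, and \<open>C_\<delta> t\<close> is its
  integral over \<open>[0, t]\<close> against the law of the censoring time. Hence, for \<open>s \<le> t\<close>, the
  increment of \<open>C_\<delta>\<close> over \<open>(s, t]\<close> lies between \<open>\<phi> s * (barG s - barG t)\<close> and
  \<open>\<phi> t * (barG s - barG t)\<close>. Fix \<open>\<mu> \<in> (0, 1)\<close> and take \<open>s = \<mu> t\<close>: the normalised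
  function \<open>D = C_\<delta> * barH powr \<delta>\<close> satisfies \<open>D t \<approx> \<mu> powr (\<delta>/\<gamma>) * D (\<mu> t) + r t\<close>,
  where by regular variation of \<open>barG\<close> and \<open>barH\<close> the remainder \<open>r t\<close> is asymptotically
  between \<open>\<mu> powr (\<delta>/\<gamma>) * (1 - \<mu> powr (1/\<gamma>\<^sub>C))\<close> and \<open>\<mu> powr (-1/\<gamma>\<^sub>C) - 1\<close>.
  Iterating this contraction bounds \<open>D\<close> asymptotically by these remainders divided by
  \<open>1 - \<mu> powr (\<delta>/\<gamma>)\<close>, and as \<open>\<mu> \<rightarrow> 1\<close> both bounds tend to \<open>(1/\<gamma>\<^sub>C) / (\<delta>/\<gamma>)\<close>.
  The regular variation of \<open>barH = barF * barG\<close> comes from that of \<open>barF = \<Sum>\<^sub>j barFj j\<close>,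
  which is dominated by the causes with the largest \<open>\<gamma>\<^sub>j\<close>. Only measures of half-open
  intervals enter.
\<close>

lemma regularly_varyingD:
  "regularly_varying f a \<Longrightarrow> x > 0 \<Longrightarrow> ((\<lambda>t. f (t * x) / f t) \<longlongrightarrow> x powr a) at_top"
  unfolding regularly_varying_def by blast

lemma regularly_varying_pos:
  fixes f :: "real \<Rightarrow> real"
  assumes "antimono f" and "\<And>t. f t \<ge> 0" and "regularly_varying f a"
  shows "f t > 0"
proof (rule ccontr)
  assume "\<not> f t > 0"
  then have "f s = 0" if "t \<le> s" for s
    using antimonoD[OF assms(1) that] assms(2)[of s] by linarith
  then have "eventually (\<lambda>s. f (s * 2) / f s = 0) at_top"
    by (intro eventually_at_top_linorderI[of t]) simp
  then have "((\<lambda>s. f (s * 2) / f s) \<longlongrightarrow> 0) at_top" by (rule tendsto_eventually)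
  moreover have "((\<lambda>s. f (s * 2) / f s) \<longlongrightarrow> 2 powr a) at_top"
    using regularly_varyingD[OF assms(3)] by simp
  ultimately show False using tendsto_unique[OF trivial_limit_at_top_linorder] by force
qed

lemma regularly_varying_mult:
  assumes "regularly_varying f a" "regularly_varying g b"
  shows "regularly_varying (\<lambda>t. f t * g t) (a + b)"
  unfolding regularly_varying_def
proof (intro allI impI)
  fix x :: real assume "x > 0"
  then have "((\<lambda>t. (f (t * x) / f t) * (g (t * x) / g t)) \<longlongrightarrow> x powr a * x powr b) at_top"
    using assms by (intro tendsto_mult regularly_varyingD)
  then show "((\<lambda>t. f (t * x) * g (t * x) / (f t * g t)) \<longlongrightarrow> x powr (a + b)) at_top"
    by (simp add: powr_add)
qed

lemma regularly_varying_powr: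
  assumes "\<And>t. f t > 0" "regularly_varying f a"
  shows "regularly_varying (\<lambda>t. f t powr p) (a * p)"
  unfolding regularly_varying_def
proof (intro allI impI)
  fix x :: real assume "x > 0"
  then have "((\<lambda>t. (f (t * x) / f t) powr p) \<longlongrightarrow> (x powr a) powr p) at_top"
    using assms by (intro tendsto_powr' regularly_varyingD) auto
  then show "((\<lambda>t. f (t * x) powr p / f t powr p) \<longlongrightarrow> x powr (a * p)) at_top"
    using assms(1) by (simp add: powr_divide powr_powr less_imp_le)
qed

lemma regularly_varying_inverse_ratio_tendsto:
  assumes "\<And>t. h t > 0" and "regularly_varying h (- c)" and "x > 0"
  shows "((\<lambda>t. h t / h (t * x)) \<longlongrightarrow> x powr c) at_top"
proof -
  have "((\<lambda>t. inverse (h (t * x) / h t)) \<longlongrightarrow> inverse (x powr - c)) at_top"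
    using assms by (intro tendsto_intros regularly_varyingD) auto
  then show ?thesis by (simp add: powr_minus)
qed

section \<open>Scaled recursive inequalities\<close>

lemma exists_power_mult_in_Icc:
  fixes \<mu> T t :: real
  assumes "0 < \<mu>" "\<mu> < 1" "0 < T" "T \<le> t"
  shows "\<exists>n. T * \<mu> \<le> t * \<mu> ^ n \<and> t * \<mu> ^ n \<le> T"
proof -
  have "(\<lambda>n. t * \<mu> ^ n) \<longlonglongrightarrow> t * 0"
    using assms by (intro tendsto_mult tendsto_const LIMSEQ_power_zero) auto
  then have "eventually (\<lambda>n. t * \<mu> ^ n < T) sequentially"
    using assms by (intro order_tendstoD) auto
  then obtain k where "t * \<mu> ^ k \<le> T" by (auto simp: eventually_sequentially intro: less_imp_le)
  define n where "n = (LEAST k. t * \<mu> ^ k \<le> T)"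
  have "t * \<mu> ^ n \<le> T" unfolding n_def by (rule LeastI) fact
  moreover have "T * \<mu> \<le> t * \<mu> ^ n"
  proof (cases n)
    case 0
    have "T * \<mu> \<le> T" using assms by (simp add: mult_left_le)
    then show ?thesis using 0 assms(4) by simp
  next
    case (Suc m)
    then have "T < t * \<mu> ^ m" using not_less_Least[of m "\<lambda>k. t * \<mu> ^ k \<le> T"] n_def by auto
    then show ?thesis using Suc assms by (simp add: mult.commute mult.left_commute)
  qed
  ultimately show ?thesis by blast
qed

lemma contraction_iterate_le:
  fixes e :: "real \<Rightarrow> real"
  assumes \<mu>: "0 < \<mu>" "\<mu> < 1" and T: "T > 0" and r: "0 \<le> r"
    and contraction: "\<And>t. T \<le> t \<Longrightarrow> e t \<le> r * e (t * \<mu>)"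
    and base: "\<And>s. T * \<mu> \<le> s \<Longrightarrow> s \<le> T \<Longrightarrow> e s \<le> B"
  shows "T * \<mu> \<le> t * \<mu> ^ n \<Longrightarrow> t * \<mu> ^ n \<le> T \<Longrightarrow> e t \<le> max B 0 * r ^ n"
proof (induction n arbitrary: t)
  case 0
  then show ?case using base by fastforce
next
  case (Suc n)
  have "T \<le> t * \<mu> ^ n" using Suc.prems(1) \<mu> by (simp add: mult.commute mult.left_commute)
  moreover have "t * \<mu> ^ n \<le> t"
    using calculation T \<mu> by (smt (verit) mult_left_le power_le_one zero_le_power mult_nonpos_nonneg)
  ultimately have "e t \<le> r * e (t * \<mu>)" using contraction by simp
  also have "\<dots> \<le> r * (max B 0 * r ^ n)"
    using Suc.IH[of "t * \<mu>"] Suc.prems r by (intro mult_left_mono) (auto simp: ac_simps)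
  finally show ?case by (simp add: ac_simps)
qed

lemma eventually_le_of_contraction:
  fixes e :: "real \<Rightarrow> real"
  assumes \<mu>: "0 < \<mu>" "\<mu> < 1" and T: "T > 0" and r: "0 \<le> r" "r < 1"
    and contraction: "\<And>t. T \<le> t \<Longrightarrow> e t \<le> r * e (t * \<mu>)"
    and base: "\<And>s. T * \<mu> \<le> s \<Longrightarrow> s \<le> T \<Longrightarrow> e s \<le> B"
    and "\<epsilon> > 0"
  shows "eventually (\<lambda>t. e t \<le> \<epsilon>) at_top"
proof -
  have "(\<lambda>n. max B 0 * r ^ n) \<longlonglongrightarrow> max B 0 * 0"
    using r by (intro tendsto_mult tendsto_const LIMSEQ_power_zero) auto
  then have "eventually (\<lambda>n. max B 0 * r ^ n < \<epsilon>) sequentially"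
    using \<open>\<epsilon> > 0\<close> by (intro order_tendstoD) auto
  then obtain N where N: "max B 0 * r ^ N < \<epsilon>" by (auto simp: eventually_sequentially)
  show ?thesis
  proof (rule eventually_at_top_linorderI[of "T / \<mu> ^ N"])
    fix t assume t: "T / \<mu> ^ N \<le> t"
    have "T \<le> T / \<mu> ^ N" using T \<mu> by (simp add: le_divide_eq power_le_one)
    then obtain n where n: "T * \<mu> \<le> t * \<mu> ^ n" "t * \<mu> ^ n \<le> T"
      using exists_power_mult_in_Icc[OF \<mu> T, of t] t by auto
    have "T * \<mu> ^ n \<le> t * \<mu> ^ n * \<mu> ^ N"
      using t \<mu> by (simp add: divide_le_eq mult_right_mono mult.commute mult.left_commute)
    also have "\<dots> \<le> T * \<mu> ^ N" using n(2) \<mu> by (simp add: mult_right_mono)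
    finally have "N \<le> n" using T \<mu> by (simp add: power_decreasing_iff)
    have "e t \<le> max B 0 * r ^ n" using contraction_iterate_le[where e = e, OF \<mu> T r(1) contraction base n] .
    also have "\<dots> \<le> max B 0 * r ^ N" using r \<open>N \<le> n\<close> by (intro mult_left_mono power_decreasing) auto
    finally show "e t \<le> \<epsilon>" using N by linarith
  qed
qed

lemma eventually_less_of_recursive_le:
  fixes D q' u' :: "real \<Rightarrow> real"
  assumes \<mu>: "0 < \<mu>" "\<mu> < 1"
    and D_nonneg: "\<And>t. t > 0 \<Longrightarrow> D t \<ge> 0"
    and D_bounded: "\<And>T. \<exists>B. \<forall>s\<in>{0<..T}. D s \<le> B"
    and q: "(q' \<longlongrightarrow> q) at_top" "0 \<le> q" "q < 1"
    and u: "(u' \<longlongrightarrow> u) at_top"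
    and rec: "eventually (\<lambda>t. D t \<le> q' t * D (t * \<mu>) + u' t) at_top"
    and "\<epsilon> > 0"
  shows "eventually (\<lambda>t. D t < u / (1 - q) + \<epsilon>) at_top"
proof -
  define U where "U = u / (1 - q) + \<epsilon> / 2"
  have "U * (1 - q) = u + \<epsilon> / 2 * (1 - q)"
    using q unfolding U_def by (simp add: field_simps)
  then have "u < U * (1 - q)" using q \<open>\<epsilon> > 0\<close> by simp
  moreover have "((\<lambda>r. U * (1 - r)) \<longlongrightarrow> U * (1 - q)) (at_right q)"
    by (intro tendsto_intros)
  ultimately have "eventually (\<lambda>r. u < U * (1 - r) \<and> r \<in> {q<..<1}) (at_right q)"
    using q by (intro eventually_conj order_tendstoD eventually_at_right_real) auto
  then obtain r where r: "u < U * (1 - r)" "r < 1" "q < r"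
    by (auto dest: eventually_happens'[OF trivial_limit_at_right_real])
  have "eventually (\<lambda>t. q' t < r \<and> u' t < U * (1 - r) \<and> D t \<le> q' t * D (t * \<mu>) + u' t) at_top"
    using q(1) u rec r by (intro eventually_conj order_tendstoD) auto
  then obtain T0 where T0:
      "\<And>t. T0 \<le> t \<Longrightarrow> q' t < r \<and> u' t < U * (1 - r) \<and> D t \<le> q' t * D (t * \<mu>) + u' t"
    by (auto simp: eventually_at_top_linorder)
  define T where "T = max T0 1"
  obtain B where B: "\<And>s. s \<in> {0<..T} \<Longrightarrow> D s \<le> B" using D_bounded by blast
  \<comment> \<open>\<open>U\<close> lies above the fixed point \<open>u / (1 - q)\<close> of the limiting recursion and
    \<open>r\<close> above \<open>q\<close>, with \<open>u < U * (1 - r)\<close>; then \<open>D - U\<close> contracts by the factor \<open>r\<close>.\<close>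
  have "eventually (\<lambda>t. D t - U \<le> \<epsilon> / 4) at_top"
  proof (rule eventually_le_of_contraction[OF \<mu> _ _ r(2)])
    fix t assume t: "T \<le> t"
    then have "D (t * \<mu>) \<ge> 0" using D_nonneg \<mu> by (simp add: T_def)
    moreover have "q' t < r" "u' t < U * (1 - r)" "D t \<le> q' t * D (t * \<mu>) + u' t"
      using T0[of t] t by (auto simp: T_def)
    ultimately have "D t \<le> r * D (t * \<mu>) + U * (1 - r)"
      by (smt (verit) mult_right_mono)
    then show "D t - U \<le> r * (D (t * \<mu>) - U)" by (simp add: algebra_simps)
  next
    fix s assume "T * \<mu> \<le> s" "s \<le> T"
    then have "s \<in> {0<..T}" using \<mu> by (smt (verit) T_def greaterThanAtMost_iff mult_pos_pos)
    then show "D s - U \<le> B - U" using B by simp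
  qed (use q r \<open>\<epsilon> > 0\<close> in \<open>auto simp: T_def\<close>)
  then show ?thesis by eventually_elim (use \<open>\<epsilon> > 0\<close> in \<open>unfold U_def; linarith\<close>)
qed

lemma eventually_greater_of_recursive_ge:
  fixes D q' l' :: "real \<Rightarrow> real"
  assumes \<mu>: "0 < \<mu>" "\<mu> < 1"
    and D_nonneg: "\<And>t. t > 0 \<Longrightarrow> D t \<ge> 0"
    and q: "(q' \<longlongrightarrow> q) at_top" "0 < q" "q < 1"
    and l: "(l' \<longlongrightarrow> l) at_top"
    and rec: "eventually (\<lambda>t. q' t * D (t * \<mu>) + l' t \<le> D t) at_top"
    and "\<epsilon> > 0"
  shows "eventually (\<lambda>t. l / (1 - q) - \<epsilon> < D t) at_top"
proof -
  define W where "W = l / (1 - q) - \<epsilon> / 2"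
  have "W * (1 - q) = l - \<epsilon> / 2 * (1 - q)"
    using q unfolding W_def by (simp add: field_simps)
  then have "W * (1 - q) < l" using q \<open>\<epsilon> > 0\<close> by simp
  moreover have "((\<lambda>r. W * (1 - r)) \<longlongrightarrow> W * (1 - q)) (at_left q)"
    by (intro tendsto_intros)
  ultimately have "eventually (\<lambda>r. W * (1 - r) < l \<and> r \<in> {0<..<q}) (at_left q)"
    using q by (intro eventually_conj order_tendstoD eventually_at_left_real) auto
  then obtain r where r: "W * (1 - r) < l" "0 < r" "r < q"
    by (auto dest: eventually_happens'[OF trivial_limit_at_left_real])
  have "eventually (\<lambda>t. r < q' t \<and> W * (1 - r) < l' t \<and> q' t * D (t * \<mu>) + l' t \<le> D t) at_top"
    using q(1) l rec r by (intro eventually_conj order_tendstoD) auto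
  then obtain T0 where T0:
      "\<And>t. T0 \<le> t \<Longrightarrow> r < q' t \<and> W * (1 - r) < l' t \<and> q' t * D (t * \<mu>) + l' t \<le> D t"
    by (auto simp: eventually_at_top_linorder)
  define T where "T = max T0 1"
  have "eventually (\<lambda>t. W - D t \<le> \<epsilon> / 4) at_top"
  proof (rule eventually_le_of_contraction[OF \<mu>, of T r])
    fix t assume t: "T \<le> t"
    then have "D (t * \<mu>) \<ge> 0" using D_nonneg \<mu> by (simp add: T_def)
    moreover have "r < q' t" "W * (1 - r) < l' t" "q' t * D (t * \<mu>) + l' t \<le> D t"
      using T0[of t] t by (auto simp: T_def)
    ultimately have "r * D (t * \<mu>) + W * (1 - r) \<le> D t"
      by (smt (verit) mult_right_mono)
    then show "W - D t \<le> r * (W - D (t * \<mu>))" by (simp add: algebra_simps)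
  next
    fix s assume "T * \<mu> \<le> s"
    then have "s > 0" using \<mu> by (smt (verit) T_def mult_pos_pos)
    then show "W - D s \<le> W" using D_nonneg by simp
  qed (use q r \<open>\<epsilon> > 0\<close> in \<open>auto simp: T_def\<close>)
  then show ?thesis by eventually_elim (use \<open>\<epsilon> > 0\<close> in \<open>unfold W_def; linarith\<close>)
qed

lemma tendsto_at_top_of_bounds_at_left_1:
  fixes D U L :: "real \<Rightarrow> real"
  assumes U: "(U \<longlongrightarrow> x) (at_left 1)" and L: "(L \<longlongrightarrow> x) (at_left 1)"
    and upper: "\<And>\<mu> \<epsilon>. 0 < \<mu> \<Longrightarrow> \<mu> < 1 \<Longrightarrow> \<epsilon> > 0 \<Longrightarrow>
      eventually (\<lambda>t. D t < U \<mu> + \<epsilon>) at_top"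
    and lower: "\<And>\<mu> \<epsilon>. 0 < \<mu> \<Longrightarrow> \<mu> < 1 \<Longrightarrow> \<epsilon> > 0 \<Longrightarrow>
      eventually (\<lambda>t. L \<mu> - \<epsilon> < D t) at_top"
  shows "(D \<longlongrightarrow> x) at_top"
proof (rule order_tendstoI)
  fix y assume "x < y"
  then have "eventually (\<lambda>\<mu>. U \<mu> < y \<and> \<mu> \<in> {0<..<1}) (at_left 1)"
    using U by (intro eventually_conj order_tendstoD eventually_at_left_real) auto
  then obtain \<mu> where "U \<mu> < y" "0 < \<mu>" "\<mu> < 1"
    by (auto dest: eventually_happens'[OF trivial_limit_at_left_real])
  then show "eventually (\<lambda>t. D t < y) at_top" using upper[of \<mu> "y - U \<mu>"] by simp
next
  fix y assume "y < x"
  then have "eventually (\<lambda>\<mu>. y < L \<mu> \<and> \<mu> \<in> {0<..<1}) (at_left 1)"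
    using L by (intro eventually_conj order_tendstoD eventually_at_left_real) auto
  then obtain \<mu> where "y < L \<mu>" "0 < \<mu>" "\<mu> < 1"
    by (auto dest: eventually_happens'[OF trivial_limit_at_left_real])
  then show "eventually (\<lambda>t. y < D t) at_top" using lower[of \<mu> "L \<mu> - y"] by simp
qed

section \<open>Sums of regularly varying tails\<close>

lemma regularly_varying_ratio_tendsto_0:
  fixes f g :: "real \<Rightarrow> real"
  assumes f: "\<And>t. f t > 0" "antimono f" "regularly_varying f a"
    and g: "\<And>t. g t > 0" "antimono g" "regularly_varying g b"
    and "a < b"
  shows "((\<lambda>t. f t / g t) \<longlongrightarrow> 0) at_top"
proof -
  define \<mu> :: real where "\<mu> = 1 / 2"
  have \<mu>: "0 < \<mu>" "\<mu> < 1" unfolding \<mu>_def by auto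
  define D where "D t = f t / g t" for t
  define q' where "q' t = inverse (f (t * \<mu>) / f t) * (g (t * \<mu>) / g t)" for t
  have q: "(q' \<longlongrightarrow> inverse (\<mu> powr a) * \<mu> powr b) at_top"
    unfolding q'_def using \<mu> f g by (intro tendsto_intros regularly_varyingD) auto
  have "inverse (\<mu> powr a) * \<mu> powr b = \<mu> powr (b - a)"
    by (simp add: powr_diff divide_inverse mult.commute)
  with q have q: "(q' \<longlongrightarrow> \<mu> powr (b - a)) at_top" by simp
  have q_less_1: "\<mu> powr (b - a) < 1" using powr_less_mono2[of "b - a" \<mu> 1] \<mu> \<open>a < b\<close> by simp
  have D_pos: "D t > 0" for t unfolding D_def using f g by simp
  have rec: "D t \<le> q' t * D (t * \<mu>) + 0" for t
    unfolding D_def q'_def using f(1)[of t] f(1)[of "t * \<mu>"] g(1)[of t] g(1)[of "t * \<mu>"]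
    by (simp add: field_simps)
  have D_bounded: "\<exists>B. \<forall>s\<in>{0<..T}. D s \<le> B" for T
  proof (intro exI ballI)
    fix s assume "s \<in> {0<..T}"
    then show "D s \<le> f 0 / g T"
      unfolding D_def using f g by (intro frac_le) (auto intro: less_imp_le antimonoD)
  qed
  have "eventually (\<lambda>t. D t < 0 / (1 - \<mu> powr (b - a)) + \<epsilon>) at_top" if "\<epsilon> > 0" for \<epsilon>
    using \<mu> D_pos D_bounded q q_less_1 tendsto_const rec that
    by (intro eventually_less_of_recursive_le[where q' = q' and u' = "\<lambda>_. 0"] always_eventually)
       (auto intro: less_imp_le)
  then have "eventually (\<lambda>t. D t < \<epsilon>) at_top" if "\<epsilon> > 0" for \<epsilon> using that by simp
  with D_pos show ?thesis unfolding D_def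
    by (intro order_tendstoI) (auto intro: always_eventually less_trans)
qed

lemma sum_divide_sum_eq_weighted_mean:
  fixes f g :: "'i \<Rightarrow> real"
  assumes "\<And>j. j \<in> J \<Longrightarrow> f j \<noteq> 0" and "sum f J \<noteq> 0"
  shows "sum g J / sum f J = c + (\<Sum>j\<in>J. f j / sum f J * (g j / f j - c))"
proof -
  have "(\<Sum>j\<in>J. f j / sum f J * (g j / f j - c)) = (\<Sum>j\<in>J. g j / sum f J - c * (f j / sum f J))"
  proof (rule sum.cong[OF refl])
    fix j assume "j \<in> J"
    then show "f j / sum f J * (g j / f j - c) = g j / sum f J - c * (f j / sum f J)"
      using assms by (simp add: field_simps)
  qed
  also have "\<dots> = sum g J / sum f J - c"
    using assms(2) by (simp add: sum_subtractf sum_divide_distrib[symmetric] sum_distrib_left[symmetric])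
  finally show ?thesis by simp
qed

lemma regularly_varying_sum:
  fixes f :: "'i \<Rightarrow> real \<Rightarrow> real" and a :: "'i \<Rightarrow> real"
  assumes J: "finite J" "k \<in> J"
    and f_pos: "\<And>j t. j \<in> J \<Longrightarrow> f j t > 0"
    and f_antimono: "\<And>j. j \<in> J \<Longrightarrow> antimono (f j)"
    and f_rv: "\<And>j. j \<in> J \<Longrightarrow> regularly_varying (f j) (a j)"
    and dominant: "\<And>j. j \<in> J \<Longrightarrow> a j \<le> a k"
  shows "regularly_varying (\<lambda>t. \<Sum>j\<in>J. f j t) (a k)"
  unfolding regularly_varying_def
proof (intro allI impI)
  fix x :: real assume x: "x > 0"
  define S where "S t = (\<Sum>j\<in>J. f j t)" for t
  define w where "w j t = f j t / S t" for j t
  define r where "r j t = f j (t * x) / f j t" for j t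
  have f_le_S: "f j t \<le> S t" if "j \<in> J" for j t
    unfolding S_def using J f_pos that by (intro member_le_sum) (auto intro: less_imp_le)
  have S_pos: "S t > 0" for t using f_le_S[OF J(2), of t] f_pos[OF J(2), of t] by linarith
  have w01: "0 \<le> w j t" "w j t \<le> 1" if "j \<in> J" for j t
    using f_pos[OF that, of t] f_le_S[OF that, of t] S_pos[of t] unfolding w_def by auto
  have "S (t * x) / S t = x powr a k + (\<Sum>j\<in>J. w j t * (r j t - x powr a k))" for t
    unfolding S_def w_def r_def using f_pos S_pos[of t]
    by (intro sum_divide_sum_eq_weighted_mean) (auto simp: S_def less_imp_neq[symmetric])
  moreover have "((\<lambda>t. w j t * (r j t - x powr a k)) \<longlongrightarrow> 0) at_top" if j: "j \<in> J" for j
  proof (cases "a j = a k")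
    case True
    have "((\<lambda>t. r j t - x powr a k) \<longlongrightarrow> x powr a j - x powr a k) at_top"
      unfolding r_def using f_rv[OF j] x by (intro tendsto_intros regularly_varyingD)
    then have "((\<lambda>t. \<bar>r j t - x powr a k\<bar>) \<longlongrightarrow> 0) at_top"
      using True tendsto_rabs_zero by fastforce
    moreover have "\<forall>t. norm (w j t * (r j t - x powr a k)) \<le> \<bar>r j t - x powr a k\<bar>"
      using w01[OF j] by (simp add: abs_mult mult_left_le_one_le)
    ultimately show ?thesis by (rule Lim_null_comparison[OF always_eventually, rotated])
  next
    case False
    then have "((\<lambda>t. f j t / f k t) \<longlongrightarrow> 0) at_top"
      using dominant[OF j] j J(2) f_pos f_antimono f_rv
      by (intro regularly_varying_ratio_tendsto_0[of "f j" "a j" "f k" "a k"]) auto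
    moreover have "\<forall>t. norm (w j t) \<le> f j t / f k t"
    proof
      fix t
      have "f j t / S t \<le> f j t / f k t"
        using f_pos[OF j, of t] f_pos[OF J(2), of t] f_le_S[OF J(2), of t] by (intro divide_left_mono) auto
      then show "norm (w j t) \<le> f j t / f k t" using w01[OF j, of t] unfolding w_def by simp
    qed
    ultimately have "(w j \<longlongrightarrow> 0) at_top" by (rule Lim_null_comparison[OF always_eventually, rotated])
    moreover have "(r j \<longlongrightarrow> x powr a j) at_top"
      unfolding r_def using f_rv[OF j] x by (rule regularly_varyingD)
    ultimately have "((\<lambda>t. w j t * (r j t - x powr a k)) \<longlongrightarrow> 0 * (x powr a j - x powr a k)) at_top"
      by (intro tendsto_intros)
    then show ?thesis by simp
  qed
  then have "((\<lambda>t. x powr a k + (\<Sum>j\<in>J. w j t * (r j t - x powr a k))) \<longlongrightarrow> x powr a k + 0) at_top"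
    by (intro tendsto_add tendsto_const tendsto_null_sum)
  ultimately show "((\<lambda>t. (\<Sum>j\<in>J. f j (t * x)) / (\<Sum>j\<in>J. f j t)) \<longlongrightarrow> x powr a k) at_top"
    unfolding S_def by simp
qed

lemma regularly_varying_sum_max_index:
  fixes f :: "'i \<Rightarrow> real \<Rightarrow> real" and \<gamma> :: "'i \<Rightarrow> real"
  assumes "finite J" and "J \<noteq> {}"
    and f_antimono: "\<And>j. j \<in> J \<Longrightarrow> antimono (f j)" and f_nonneg: "\<And>j t. j \<in> J \<Longrightarrow> f j t \<ge> 0"
    and \<gamma>_pos: "\<And>j. j \<in> J \<Longrightarrow> \<gamma> j > 0"
    and f_rv: "\<And>j. j \<in> J \<Longrightarrow> regularly_varying (f j) (- 1 / \<gamma> j)"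
  shows "regularly_varying (\<lambda>t. \<Sum>j\<in>J. f j t) (- 1 / Max (\<gamma> ` J))"
proof -
  have "Max (\<gamma> ` J) \<in> \<gamma> ` J" using \<open>finite J\<close> \<open>J \<noteq> {}\<close> by (intro Max_in) auto
  then obtain k where k: "k \<in> J" "\<gamma> k = Max (\<gamma> ` J)" by (metis imageE)
  have "- 1 / \<gamma> j \<le> - 1 / \<gamma> k" if "j \<in> J" for j
    using that k \<gamma>_pos \<open>finite J\<close> by (simp add: frac_le)
  moreover have "f j t > 0" if "j \<in> J" for j t
    using that f_antimono f_nonneg f_rv by (intro regularly_varying_pos) auto
  ultimately show ?thesis
    using regularly_varying_sum[of J k f "\<lambda>j. - 1 / \<gamma> j"] k \<open>finite J\<close> f_antimono f_rv by simp
qed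

section \<open>A discrete Karamata argument\<close>

lemma regularly_varying_of_tendsto_mult:
  fixes C h :: "real \<Rightarrow> real"
  assumes lim: "((\<lambda>t. C t * h t) \<longlongrightarrow> L) at_top" and "L \<noteq> 0"
    and h: "\<And>t. h t > 0" "regularly_varying h (- c)"
  shows "regularly_varying C c"
  unfolding regularly_varying_def
proof (intro allI impI)
  fix x :: real assume x: "x > 0"
  have "filterlim (\<lambda>t. t * x) at_top at_top"
    using x by (intro filterlim_at_top_mult_tendsto_pos[OF tendsto_const] filterlim_ident)
  then have "((\<lambda>t. C (t * x) * h (t * x)) \<longlongrightarrow> L) at_top"
    by (rule filterlim_compose[OF lim])
  then have "((\<lambda>t. C (t * x) * h (t * x) / (C t * h t) * (h t / h (t * x)))
      \<longlongrightarrow> L / L * x powr c) at_top"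
    using lim \<open>L \<noteq> 0\<close> x h by (intro tendsto_intros regularly_varying_inverse_ratio_tendsto) auto
  moreover have "C (t * x) * h (t * x) / (C t * h t) * (h t / h (t * x)) = C (t * x) / C t" for t
    using h(1)[of t] h(1)[of "t * x"] by (simp add: field_simps)
  ultimately show "((\<lambda>t. C (t * x) / C t) \<longlongrightarrow> x powr c) at_top"
    using \<open>L \<noteq> 0\<close> by simp
qed

lemma asymp_equiv_of_tendsto_mult:
  fixes C h :: "real \<Rightarrow> real"
  assumes lim: "((\<lambda>t. C t * h t) \<longlongrightarrow> L) at_top" and "L \<noteq> 0" and h: "\<And>t. h t \<noteq> 0"
  shows "C \<sim>[at_top] (\<lambda>t. L / h t)"
proof (rule asymp_equivI')
  have "((\<lambda>t. C t * h t / L) \<longlongrightarrow> L / L) at_top" using lim \<open>L \<noteq> 0\<close> by (intro tendsto_divide tendsto_const)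
  then show "((\<lambda>t. C t / (L / h t)) \<longlongrightarrow> 1) at_top" using \<open>L \<noteq> 0\<close> h by simp
qed

lemma powr_neg_diff_quotient_tendsto:
  "a > 0 \<Longrightarrow> (c::real) > 0 \<Longrightarrow>
    ((\<lambda>\<mu>::real. (\<mu> powr - a - 1) / (1 - \<mu> powr c)) \<longlongrightarrow> a / c) (at_left 1)"
  unfolding divide_inverse[of a c] by real_asymp

lemma powr_diff_quotient_tendsto:
  "a > 0 \<Longrightarrow> (c::real) > 0 \<Longrightarrow>
    ((\<lambda>\<mu>::real. \<mu> powr c * (1 - \<mu> powr a) / (1 - \<mu> powr c)) \<longlongrightarrow> a / c) (at_left 1)"
  unfolding divide_inverse[of a c] by real_asymp

lemma tendsto_of_tail_recursion:
  fixes D G h :: "real \<Rightarrow> real"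
  assumes "a > 0" and "c > 0"
    and G_pos: "\<And>t. G t > 0" and "antimono G" and G_rv: "regularly_varying G (- a)"
    and h_pos: "\<And>t. h t > 0" and h_rv: "regularly_varying h (- c)"
    and D_nonneg: "\<And>t. D t \<ge> 0" and D_le: "\<And>t. D t \<le> 1 / G t"
    and rec_le: "\<And>s t. 0 < s \<Longrightarrow> s \<le> t \<Longrightarrow> D t \<le> h t / h s * D s + (G s / G t - 1)"
    and rec_ge: "\<And>s t. 0 < s \<Longrightarrow> s \<le> t \<Longrightarrow> h t / h s * (D s + 1 - G t / G s) \<le> D t"
  shows "(D \<longlongrightarrow> a / c) at_top"
proof (rule tendsto_at_top_of_bounds_at_left_1)
  show "((\<lambda>\<mu>. (\<mu> powr - a - 1) / (1 - \<mu> powr c)) \<longlongrightarrow> a / c) (at_left 1)"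
    using \<open>a > 0\<close> \<open>c > 0\<close> by (rule powr_neg_diff_quotient_tendsto)
  show "((\<lambda>\<mu>. \<mu> powr c * (1 - \<mu> powr a) / (1 - \<mu> powr c)) \<longlongrightarrow> a / c) (at_left 1)"
    using \<open>a > 0\<close> \<open>c > 0\<close> by (rule powr_diff_quotient_tendsto)
next
  fix \<mu> \<epsilon> :: real assume \<mu>: "0 < \<mu>" "\<mu> < 1" and "\<epsilon> > 0"
  define q' where "q' t = h t / h (t * \<mu>)" for t
  have q': "(q' \<longlongrightarrow> \<mu> powr c) at_top"
    unfolding q'_def using h_pos h_rv \<mu>(1) by (rule regularly_varying_inverse_ratio_tendsto)
  have q: "0 < \<mu> powr c" "\<mu> powr c < 1"
    using \<mu> \<open>c > 0\<close> powr_less_mono2[of c \<mu> 1] by auto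
  have G_ratio: "((\<lambda>t. G (t * \<mu>) / G t) \<longlongrightarrow> \<mu> powr - a) at_top"
    using \<mu> G_rv by (intro regularly_varyingD)
  have scaled: "eventually (\<lambda>t. 0 < t * \<mu> \<and> t * \<mu> \<le> t) at_top"
    using eventually_gt_at_top[of 0] by eventually_elim (use \<mu> in auto)
  have D_bounded: "\<exists>B. \<forall>s\<in>{0<..T}. D s \<le> B" for T
  proof (intro exI ballI)
    fix s assume "s \<in> {0<..T}"
    then have "1 / G s \<le> 1 / G T"
      using G_pos antimonoD[OF \<open>antimono G\<close>, of s T] by (intro divide_left_mono) auto
    then show "D s \<le> 1 / G T" using D_le[of s] by linarith
  qed
  show "eventually (\<lambda>t. D t < (\<mu> powr - a - 1) / (1 - \<mu> powr c) + \<epsilon>) at_top"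
  proof (rule eventually_less_of_recursive_le[OF \<mu> _ D_bounded q' _ q(2) _ _ \<open>\<epsilon> > 0\<close>])
    show "((\<lambda>t. G (t * \<mu>) / G t - 1) \<longlongrightarrow> \<mu> powr - a - 1) at_top"
      using G_ratio by (intro tendsto_intros)
    show "eventually (\<lambda>t. D t \<le> q' t * D (t * \<mu>) + (G (t * \<mu>) / G t - 1)) at_top"
      using scaled by eventually_elim (use rec_le in \<open>simp only: q'_def\<close>)
  qed (use D_nonneg q in auto)
  have "((\<lambda>t. q' t * (1 - inverse (G (t * \<mu>) / G t))) \<longlongrightarrow> \<mu> powr c * (1 - inverse (\<mu> powr - a))) at_top"
    using q' G_ratio \<mu> by (intro tendsto_intros) auto
  then have l': "((\<lambda>t. q' t * (1 - G t / G (t * \<mu>))) \<longlongrightarrow> \<mu> powr c * (1 - \<mu> powr a)) at_top"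
    by (simp add: powr_minus)
  show "eventually (\<lambda>t. \<mu> powr c * (1 - \<mu> powr a) / (1 - \<mu> powr c) - \<epsilon> < D t) at_top"
  proof (rule eventually_greater_of_recursive_ge[OF \<mu> _ q' q l' _ \<open>\<epsilon> > 0\<close>])
    show "eventually (\<lambda>t. q' t * D (t * \<mu>) + q' t * (1 - G t / G (t * \<mu>)) \<le> D t) at_top"
      using scaled
    proof eventually_elim
      case (elim t)
      have "q' t * D (t * \<mu>) + q' t * (1 - G t / G (t * \<mu>))
          = h t / h (t * \<mu>) * (D (t * \<mu>) + 1 - G t / G (t * \<mu>))"
        unfolding q'_def using h_pos[of "t * \<mu>"] by (simp add: field_simps)
      with elim show ?case using rec_ge[of "t * \<mu>" t] by simp
    qed
  qed (use D_nonneg in auto)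
qed

lemma antimono_measure_Ioi:
  fixes \<nu> :: "real measure"
  assumes "finite_measure \<nu>" and "sets \<nu> = sets borel"
  shows "antimono (\<lambda>t. measure \<nu> {t<..})"
  using assms by (intro antimonoI finite_measure.finite_measure_mono) auto

lemma set_integrable_mono_fun:
  fixes \<phi> :: "real \<Rightarrow> real" and \<nu> :: "real measure"
  assumes \<nu>: "finite_measure \<nu>" "sets \<nu> = sets borel"
    and "mono \<phi>" and A: "A \<in> sets borel" "A \<subseteq> {s..t}"
  shows "set_integrable \<nu> A \<phi>"
  unfolding set_integrable_def
proof (rule finite_measure.integrable_const_bound[OF \<nu>(1), where B = "\<bar>\<phi> s\<bar> + \<bar>\<phi> t\<bar>"])
  have "norm (indicator A x *\<^sub>R \<phi> x) \<le> \<bar>\<phi> s\<bar> + \<bar>\<phi> t\<bar>" for x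
    using A monoD[OF \<open>mono \<phi>\<close>, of s x] monoD[OF \<open>mono \<phi>\<close>, of x t]
    by (cases "x \<in> A") (auto simp: subset_iff)
  then show "AE x in \<nu>. norm (indicator A x *\<^sub>R \<phi> x) \<le> \<bar>\<phi> s\<bar> + \<bar>\<phi> t\<bar>" by simp
  have "\<phi> \<in> borel_measurable borel" using \<open>mono \<phi>\<close> by (rule borel_measurable_mono)
  then show "(\<lambda>x. indicator A x *\<^sub>R \<phi> x) \<in> borel_measurable \<nu>"
    using A(1) by (simp add: measurable_cong_sets[OF \<nu>(2) refl])
qed

lemma set_integral_mono_fun_bounds:
  fixes \<phi> :: "real \<Rightarrow> real" and \<nu> :: "real measure"
  assumes \<nu>: "finite_measure \<nu>" "sets \<nu> = sets borel"
    and "mono \<phi>" and A: "A \<in> sets borel" "A \<subseteq> {s..t}"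
  shows "\<phi> s * measure \<nu> A \<le> (LINT v:A|\<nu>. \<phi> v)" and "(LINT v:A|\<nu>. \<phi> v) \<le> \<phi> t * measure \<nu> A"
proof -
  have "(LINT v:A|\<nu>. c) = c * measure \<nu> A" and "set_integrable \<nu> A (\<lambda>_. c)" for c
    using A \<nu> by (auto simp: finite_measure.emeasure_finite set_integral_const mult.commute
        intro!: set_integrable_mono_fun monoI)
  moreover have "set_integrable \<nu> A \<phi>" using assms by (rule set_integrable_mono_fun)
  moreover have "\<phi> s \<le> \<phi> v" "\<phi> v \<le> \<phi> t" if "v \<in> A" for v
    using that A monoD[OF \<open>mono \<phi>\<close>] by (auto simp: subset_iff)
  ultimately show "\<phi> s * measure \<nu> A \<le> (LINT v:A|\<nu>. \<phi> v)" "(LINT v:A|\<nu>. \<phi> v) \<le> \<phi> t * measure \<nu> A"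
    by (metis set_integral_mono)+
qed

lemma set_integral_mono_fun_Icc_split:
  fixes \<phi> :: "real \<Rightarrow> real" and \<nu> :: "real measure"
  assumes \<nu>: "finite_measure \<nu>" "sets \<nu> = sets borel" and "mono \<phi>"
    and "a \<le> s" "s \<le> t"
  shows "(LINT v:{a..t}|\<nu>. \<phi> v) = (LINT v:{a..s}|\<nu>. \<phi> v) + (LINT v:{s<..t}|\<nu>. \<phi> v)"
proof -
  have "set_integrable \<nu> {a..s} \<phi>" "set_integrable \<nu> {s<..t} \<phi>"
    using set_integrable_mono_fun[OF assms(1-3), of "{a..s}" a s]
      set_integrable_mono_fun[OF assms(1-3), of "{s<..t}" s t]
    by (auto simp: subset_eq)
  then have "(LINT v:{a..s} \<union> {s<..t}|\<nu>. \<phi> v) = (LINT v:{a..s}|\<nu>. \<phi> v) + (LINT v:{s<..t}|\<nu>. \<phi> v)"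
    by (intro set_integral_Un) auto
  moreover have "{a..s} \<union> {s<..t} = {a..t}" using assms(4,5) by auto
  ultimately show ?thesis by simp
qed

lemma measure_Ioc_eq_diff_Ioi:
  fixes \<nu> :: "real measure"
  assumes "finite_measure \<nu>" and "sets \<nu> = sets borel" and "s \<le> t"
  shows "measure \<nu> {s<..t} = measure \<nu> {s<..} - measure \<nu> {t<..}"
proof -
  have "{s<..} = {s<..t} \<union> {t<..}" using \<open>s \<le> t\<close> by auto
  moreover have "measure \<nu> ({s<..t} \<union> {t<..}) = measure \<nu> {s<..t} + measure \<nu> {t<..}"
    using assms(1,2) by (intro finite_measure.finite_measure_Union) auto
  ultimately show ?thesis by simp
qed

lemma integral_inverse_tail_recursion:
  fixes \<nu> :: "real measure" and G h D :: "real \<Rightarrow> real"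
  assumes "prob_space \<nu>" and sets_\<nu>: "sets \<nu> = sets borel"
    and G_eq: "G = (\<lambda>t. measure \<nu> {t<..})" and G_pos: "\<And>t. G t > 0"
    and h_pos: "\<And>t. h t > 0" and "antimono h"
    and D_eq: "D = (\<lambda>t. (LINT v:{0..t}|\<nu>. 1 / (G v * h v)) * h t)"
  shows "D t \<ge> 0" and "D t \<le> 1 / G t"
    and "0 < s \<Longrightarrow> s \<le> t \<Longrightarrow> D t \<le> h t / h s * D s + (G s / G t - 1)"
    and "0 < s \<Longrightarrow> s \<le> t \<Longrightarrow> h t / h s * (D s + 1 - G t / G s) \<le> D t"
proof -
  interpret prob_space \<nu> by fact
  define \<phi> where "\<phi> v = 1 / (G v * h v)" for v
  define C where "C t = (LINT v:{0..t}|\<nu>. \<phi> v)" for t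
  have "antimono G" unfolding G_eq by (rule antimono_measure_Ioi[OF finite_measure_axioms sets_\<nu>])
  have "mono \<phi>"
  proof (intro monoI)
    fix s t :: real assume "s \<le> t"
    then have "G t * h t \<le> G s * h s"
      using antimonoD[OF \<open>antimono G\<close>] antimonoD[OF \<open>antimono h\<close>] G_pos h_pos
      by (intro mult_mono) (auto intro: less_imp_le)
    then show "\<phi> s \<le> \<phi> t" unfolding \<phi>_def using G_pos h_pos by (intro divide_left_mono) auto
  qed
  have \<phi>_bounds: "\<phi> s * measure \<nu> A \<le> (LINT v:A|\<nu>. \<phi> v)" "(LINT v:A|\<nu>. \<phi> v) \<le> \<phi> t * measure \<nu> A"
    if "A \<in> sets borel" "A \<subseteq> {s..t}" for A s t
    using set_integral_mono_fun_bounds[OF finite_measure_axioms sets_\<nu> \<open>mono \<phi>\<close> that] by auto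
  have C_split: "C t = C s + (LINT v:{s<..t}|\<nu>. \<phi> v)" if "0 \<le> s" "s \<le> t" for s t
    unfolding C_def using set_integral_mono_fun_Icc_split[OF finite_measure_axioms sets_\<nu> \<open>mono \<phi>\<close> that] .
  have C_nonneg: "C t \<ge> 0" for t
  proof -
    have "0 \<le> \<phi> 0 * measure \<nu> {0..t}" using G_pos[of 0] h_pos[of 0] unfolding \<phi>_def by simp
    also have "\<dots> \<le> C t" unfolding C_def by (rule \<phi>_bounds(1)) auto
    finally show ?thesis .
  qed
  have C_le: "C t \<le> \<phi> t" for t
  proof -
    have "C t \<le> \<phi> t * measure \<nu> {0..t}" unfolding C_def by (rule \<phi>_bounds(2)) auto
    also have "\<dots> \<le> \<phi> t"
      using prob_le_1[of "{0..t}"] G_pos[of t] h_pos[of t] unfolding \<phi>_def by (simp add: divide_right_mono)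
    finally show ?thesis .
  qed
  have increment: "h t * (LINT v:{s<..t}|\<nu>. \<phi> v) \<le> G s / G t - 1"
    "h t / h s * (1 - G t / G s) \<le> h t * (LINT v:{s<..t}|\<nu>. \<phi> v)" if "s \<le> t" for s t
  proof -
    have I: "\<phi> s * (G s - G t) \<le> (LINT v:{s<..t}|\<nu>. \<phi> v)" "(LINT v:{s<..t}|\<nu>. \<phi> v) \<le> \<phi> t * (G s - G t)"
      using \<phi>_bounds[of "{s<..t}" s t] measure_Ioc_eq_diff_Ioi[OF finite_measure_axioms sets_\<nu> that]
      by (simp_all add: greaterThanAtMost_subseteq_atLeastAtMost_iff G_eq)
    have "h t * (LINT v:{s<..t}|\<nu>. \<phi> v) \<le> h t * (\<phi> t * (G s - G t))"
      using I(2) h_pos[of t] by simp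
    also have "\<dots> = G s / G t - 1"
      using G_pos[of t] h_pos[of t] unfolding \<phi>_def by (simp add: field_simps)
    finally show "h t * (LINT v:{s<..t}|\<nu>. \<phi> v) \<le> G s / G t - 1" .
    have "h t / h s * (1 - G t / G s) = h t * (\<phi> s * (G s - G t))"
      using G_pos[of s] h_pos[of s] unfolding \<phi>_def by (simp add: field_simps)
    also have "\<dots> \<le> h t * (LINT v:{s<..t}|\<nu>. \<phi> v)"
      using I(1) h_pos[of t] by simp
    finally show "h t / h s * (1 - G t / G s) \<le> h t * (LINT v:{s<..t}|\<nu>. \<phi> v)" .
  qed
  have D_C: "D t = C t * h t" for t unfolding D_eq C_def \<phi>_def by simp
  show "D t \<ge> 0" using C_nonneg h_pos unfolding D_C by (simp add: less_imp_le)
  show "D t \<le> 1 / G t"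
    using C_le[of t] h_pos[of t] G_pos[of t] unfolding D_C \<phi>_def by (simp add: field_simps)
  have split: "D t = h t / h s * D s + h t * (LINT v:{s<..t}|\<nu>. \<phi> v)" if "0 < s" "s \<le> t"
    using C_split[of s t] h_pos[of s] that unfolding D_C by (simp add: field_simps)
  show "D t \<le> h t / h s * D s + (G s / G t - 1)" if "0 < s" "s \<le> t"
    using split[OF that] increment[OF that(2)] by simp
  have "h t / h s * (D s + 1 - G t / G s) = h t / h s * D s + h t / h s * (1 - G t / G s)"
    by (simp only: add_diff_eq[symmetric] distrib_left)
  then show "h t / h s * (D s + 1 - G t / G s) \<le> D t" if "0 < s" "s \<le> t"
    using split[OF that] increment(2)[OF that(2)] by linarith
qed

lemma tendsto_integral_inverse_tail_mult:
  fixes \<nu> :: "real measure" and h :: "real \<Rightarrow> real"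
  assumes "prob_space \<nu>" and sets_\<nu>: "sets \<nu> = sets borel"
    and G_rv: "regularly_varying (\<lambda>t. measure \<nu> {t<..}) (- a)" and "a > 0"
    and h_pos: "\<And>t. h t > 0" and "antimono h" and h_rv: "regularly_varying h (- c)" and "c > 0"
  shows "((\<lambda>t. (LINT v:{0..t}|\<nu>. 1 / (measure \<nu> {v<..} * h v)) * h t) \<longlongrightarrow> a / c) at_top"
proof -
  define G where "G = (\<lambda>t. measure \<nu> {t<..})"
  define D where "D = (\<lambda>t. (LINT v:{0..t}|\<nu>. 1 / (G v * h v)) * h t)"
  have "antimono G"
    unfolding G_def using assms(1) sets_\<nu> by (intro antimono_measure_Ioi prob_space.finite_measure)
  have G_rv': "regularly_varying G (- a)" unfolding G_def by (fact G_rv)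
  have G_pos: "G t > 0" for t
    by (rule regularly_varying_pos[OF \<open>antimono G\<close> _ G_rv']) (simp add: G_def)
  note D = integral_inverse_tail_recursion[OF assms(1) sets_\<nu> G_def G_pos h_pos \<open>antimono h\<close> D_def]
  have "(D \<longlongrightarrow> a / c) at_top"
    by (rule tendsto_of_tail_recursion[OF \<open>a > 0\<close> \<open>c > 0\<close> G_pos \<open>antimono G\<close> G_rv' h_pos h_rv D])
  then show ?thesis unfolding D_def G_def .
qed

section \<open>The censored competing-risks model\<close>

lemma (in prob_space) one_minus_prob_le_eq_measure_distr:
  fixes Y :: "'a \<Rightarrow> real"
  assumes [measurable]: "Y \<in> borel_measurable M"
  shows "1 - prob {\<omega>\<in>space M. Y \<omega> \<le> t} = measure (distr M borel Y) {t<..}"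
proof -
  have "measure (distr M borel Y) {t<..} = prob (Y -` {t<..} \<inter> space M)"
    by (rule measure_distr) auto
  also have "Y -` {t<..} \<inter> space M = space M - {\<omega>\<in>space M. Y \<omega> \<le> t}" by auto
  also have "prob \<dots> = 1 - prob {\<omega>\<in>space M. Y \<omega> \<le> t}" by (rule prob_compl) measurable
  finally show ?thesis by simp
qed

lemma (in prob_space) antimono_tail:
  fixes Y :: "'a \<Rightarrow> real"
  assumes "Y \<in> borel_measurable M"
  shows "antimono (\<lambda>t. 1 - prob {\<omega>\<in>space M. Y \<omega> \<le> t})"
proof -
  have "prob_space (distr M borel Y)" using assms by (rule prob_space_distr)
  then show ?thesis
    using assms antimono_measure_Ioi[OF prob_space.finite_measure]
    by (simp add: one_minus_prob_le_eq_measure_distr)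
qed

lemma (in prob_space) regularly_varying_tail_of_cause_tails:
  fixes X :: "'a \<Rightarrow> real" and cause :: "'a \<Rightarrow> 'c"
  assumes [measurable]: "X \<in> borel_measurable M" "cause \<in> measurable M (count_space UNIV)"
    and cause: "\<And>\<omega>. \<omega> \<in> space M \<Longrightarrow> cause \<omega> \<in> J" and "finite J" and "J \<noteq> {}"
    and \<gamma>: "\<And>j. j \<in> J \<Longrightarrow> \<gamma> j > 0 \<and>
           regularly_varying (\<lambda>t. prob {\<omega>\<in>space M. X \<omega> > t \<and> cause \<omega> = j}) (- 1 / \<gamma> j)"
  shows "regularly_varying (\<lambda>t. 1 - prob {\<omega>\<in>space M. X \<omega> \<le> t}) (- 1 / Max (\<gamma> ` J))"
proof -
  have "1 - prob {\<omega>\<in>space M. X \<omega> \<le> t} = (\<Sum>j\<in>J. prob {\<omega>\<in>space M. X \<omega> > t \<and> cause \<omega> = j})" for t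
  proof -
    have "space M - {\<omega>\<in>space M. X \<omega> \<le> t} = (\<Union>j\<in>J. {\<omega>\<in>space M. X \<omega> > t \<and> cause \<omega> = j})"
      using cause by auto
    moreover have "prob (\<Union>j\<in>J. {\<omega>\<in>space M. X \<omega> > t \<and> cause \<omega> = j})
        = (\<Sum>j\<in>J. prob {\<omega>\<in>space M. X \<omega> > t \<and> cause \<omega> = j})"
      using \<open>finite J\<close> by (intro finite_measure_finite_Union) (auto simp: disjoint_family_on_def)
    ultimately show ?thesis by (simp add: prob_compl[symmetric])
  qed
  moreover have "antimono (\<lambda>t. prob {\<omega>\<in>space M. X \<omega> > t \<and> cause \<omega> = j})" for j
    by (intro antimonoI finite_measure_mono) auto
  ultimately show ?thesis
    using regularly_varying_sum_max_index[OF \<open>finite J\<close> \<open>J \<noteq> {}\<close>] \<gamma> by simp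
qed

theorem lemma8:
  fixes M :: "'a measure" and X Cc :: "'a \<Rightarrow> real" and cause :: "'a \<Rightarrow> nat"
    and K :: nat and gam_j :: "nat \<Rightarrow> real" and gam_C \<delta> :: real
  assumes "prob_space M" and "K \<ge> 1"
    and "X \<in> borel_measurable M" and "Cc \<in> borel_measurable M"
    and "cause \<in> measurable M (count_space UNIV)"
    and "\<forall>\<omega>\<in>space M. X \<omega> \<ge> 0 \<and> cause \<omega> \<in> {1..K} \<and> Cc \<omega> \<ge> 0"
    and "\<forall>A\<in>sets (borel \<Otimes>\<^sub>M count_space UNIV). \<forall>B\<in>sets (borel :: real measure).
           measure M {\<omega>\<in>space M. (X \<omega>, cause \<omega>) \<in> A \<and> Cc \<omega> \<in> B} =
           measure M {\<omega>\<in>space M. (X \<omega>, cause \<omega>) \<in> A} * measure M {\<omega>\<in>space M. Cc \<omega> \<in> B}"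
  defines "F \<equiv> \<lambda>t. measure M {\<omega>\<in>space M. X \<omega> \<le> t}"
    and "barFj \<equiv> \<lambda>j t. measure M {\<omega>\<in>space M. X \<omega> > t \<and> cause \<omega> = j}"
    and "G \<equiv> \<lambda>t. measure M {\<omega>\<in>space M. Cc \<omega> \<le> t}"
  defines "barF \<equiv> \<lambda>t. 1 - F t"
    and "barG \<equiv> \<lambda>t. 1 - G t"
  defines "barH \<equiv> \<lambda>t. barF t * barG t"
    and "gam_F \<equiv> Max (gam_j ` {1..K})"
  defines "gam \<equiv> 1 / (1 / gam_F + 1 / gam_C)"
    and "C_\<delta> \<equiv> \<lambda>t. LINT v:{0..t}|distr M borel Cc. 1 / (barG v * barH v powr \<delta>)"
  assumes "continuous_on UNIV F" and "continuous_on UNIV G"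
    and "\<forall>j\<in>{1..K}. gam_j j > 0 \<and> regularly_varying (barFj j) (- 1 / gam_j j)"
    and "gam_C > 0" and "regularly_varying barG (- 1 / gam_C)"
    and "\<delta> > 0"
  shows "regularly_varying C_\<delta> (\<delta> / gam) \<and>
         C_\<delta> \<sim>[at_top] (\<lambda>t. (gam / gam_C) / (\<delta> * barH t powr \<delta>))"
proof -
  interpret prob_space M by fact
  note [measurable] = assms(3-5)
  define \<nu> where "\<nu> = distr M borel Cc"
  define h where "h t = barH t powr \<delta>" for t
  have \<nu>: "prob_space \<nu>" "sets \<nu> = sets borel" unfolding \<nu>_def by (auto intro: prob_space_distr)
  have barG_eq: "barG = (\<lambda>t. measure \<nu> {t<..})"
    unfolding barG_def G_def \<nu>_def by (auto simp: one_minus_prob_le_eq_measure_distr)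
  have barF_rv: "regularly_varying barF (- 1 / gam_F)"
    unfolding barF_def F_def gam_F_def
    using assms(2,6) assms(19)[unfolded barFj_def]
    by (intro regularly_varying_tail_of_cause_tails[where cause = cause]) auto
  have barF_antimono: "antimono barF" and barG_antimono: "antimono barG"
    unfolding barF_def F_def barG_def G_def by (simp_all add: antimono_tail)
  have barF_pos: "barF t > 0" and barG_pos: "barG t > 0" for t
    using regularly_varying_pos[OF barF_antimono _ barF_rv] regularly_varying_pos[OF barG_antimono _ assms(21)]
    by (simp_all add: barF_def F_def barG_def G_def)
  have "gam_F > 0"
    unfolding gam_F_def using assms(2,19) by (subst Max_gr_iff) auto
  then have "gam > 0" and gam_inv: "- 1 / gam = - 1 / gam_F + - 1 / gam_C"
    using assms(20) unfolding gam_def by (simp_all add: field_simps add_pos_pos)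
  have h_pos: "h t > 0" for t unfolding h_def barH_def using barF_pos[of t] barG_pos[of t] by simp
  have "antimono h"
    unfolding h_def barH_def using barF_pos barG_pos \<open>\<delta> > 0\<close> barF_antimono barG_antimono
    by (intro antimonoI powr_mono2 mult_mono) (auto intro: less_imp_le dest: antimonoD)
  have "regularly_varying barH (- 1 / gam)"
    unfolding barH_def gam_inv by (intro regularly_varying_mult barF_rv assms(21))
  then have h_rv: "regularly_varying h (- (\<delta> / gam))"
    using regularly_varying_powr[of barH "- 1 / gam" \<delta>] barF_pos barG_pos
    unfolding h_def barH_def by simp
  define L where "L = (1 / gam_C) / (\<delta> / gam)"
  have "L \<noteq> 0" unfolding L_def using assms(20,22) \<open>gam > 0\<close> by simp
  have "((\<lambda>t. (LINT v:{0..t}|\<nu>. 1 / (measure \<nu> {v<..} * h v)) * h t) \<longlongrightarrow> L) at_top"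
    unfolding L_def using assms(20-22) \<open>gam > 0\<close> assms(21)[unfolded barG_eq]
    by (intro tendsto_integral_inverse_tail_mult[OF \<nu> _ _ h_pos \<open>antimono h\<close> h_rv]) simp_all
  then have lim: "((\<lambda>t. C_\<delta> t * h t) \<longlongrightarrow> L) at_top"
    unfolding C_\<delta>_def h_def \<nu>_def barG_eq .
  have "(\<lambda>t. L / h t) = (\<lambda>t. (gam / gam_C) / (\<delta> * barH t powr \<delta>))"
    unfolding L_def h_def using assms(20) \<open>gam > 0\<close> by (auto simp: field_simps)
  then show ?thesis
    using regularly_varying_of_tendsto_mult[OF lim \<open>L \<noteq> 0\<close> h_pos h_rv]
      asymp_equiv_of_tendsto_mult[OF lim \<open>L \<noteq> 0\<close>] h_pos by (simp add: less_imp_neq[symmetric])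
qed

end
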